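(* Let $X$ be an infinite dimensional separable Banach space and $T:X\to X$ a continuous linear operator such that $(X,T)$ is topologically transitive. If $(X,T)$ is not transitively sensitive, then there exists a dense open subset $U_0\subset X$ such that every $x\in U_0$ has a dense orbit $\{T^nx:n\in\mathbb{Z}_+\}$.
   Context: $N_T(U,V)=\{n\in\mathbb{Z}_+:U\cap T^{-n}V\neq\varnothing\}$; $(X,T)$ is topologically transitive if $N_T(U,V)\neq\varnothing$ for all nonempty open $U,V$. $S_T(W,\delta)=\{n\in\mathbb{Z}_+:\exists x_1,x_2\in W,\ \|T^nx_1-T^nx_2\|>\delta\}$. $(X,T)$ is transitively sensitive if there is $\delta>0$ with $S_T(W,\delta)\cap N_T(U,V)\neq\varnothing$ for all nonempty open $U,V,W\subset X$. *)

theory Defs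
  imports "HOL-Analysis.Analysis"
begin

text \<open>Z_+ is read as the natural numbers including 0.\<close>

definition N_T :: "('a \<Rightarrow> 'a) \<Rightarrow> 'a set \<Rightarrow> 'a set \<Rightarrow> nat set" where
  "N_T T U V = {n. U \<inter> (T ^^ n) -` V \<noteq> {}}"

definition S_T :: "('a::real_normed_vector \<Rightarrow> 'a) \<Rightarrow> 'a set \<Rightarrow> real \<Rightarrow> nat set" where
  "S_T T W \<delta> = {n. \<exists>x1\<in>W. \<exists>x2\<in>W. norm ((T ^^ n) x1 - (T ^^ n) x2) > \<delta>}"

definition topologically_transitive :: "('a::topological_space \<Rightarrow> 'a) \<Rightarrow> bool" where
  "topologically_transitive T \<longleftrightarrow>
     (\<forall>U V. open U \<and> U \<noteq> {} \<and> open V \<and> V \<noteq> {} \<longrightarrow> N_T T U V \<noteq> {})"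

definition transitively_sensitive :: "('a::real_normed_vector \<Rightarrow> 'a) \<Rightarrow> bool" where
  "transitively_sensitive T \<longleftrightarrow>
     (\<exists>\<delta>>0. \<forall>U V W. open U \<and> U \<noteq> {} \<and> open V \<and> V \<noteq> {} \<and> open W \<and> W \<noteq> {}
        \<longrightarrow> S_T T W \<delta> \<inter> N_T T U V \<noteq> {})"

end

theory Submission
  imports Defs
begin

text \<open>
  If \<open>(X, T)\<close> is not transitively sensitive (with \<open>\<delta> = 1\<close>), there are nonempty open
  \<open>U, V, W\<close> such that \<open>T\<^sup>n W\<close> has diameter at most 1 whenever \<open>n \<in> N_T U V\<close>. By linearity
  the powers \<open>T\<^sup>n\<close>, \<open>n \<in> N_T U V\<close>, are then uniformly bounded operators. Hence if \<open>q \<in> U\<close>,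
  the orbit of \<open>q\<close> follows the orbit of any nearby \<open>x \<in> U\<close> that visits \<open>V\<close>, so the orbit
  closure of \<open>q\<close> contains \<open>V\<close>. That closure is closed and \<open>T\<close>-invariant with nonempty
  interior, so by transitivity it is all of \<open>X\<close>. Thus every point of the open dense set
  \<open>\<Union>\<^sub>n T\<^sup>-\<^sup>n U\<close> has a dense orbit.
\<close>

lemma linear_funpow:
  fixes T :: "'a::real_vector \<Rightarrow> 'a"
  assumes "linear T"
  shows "linear (T ^^ n)"
proof (induction n)
  case 0
  show ?case using linear_id by (simp add: id_def)
next
  case (Suc n)
  then show ?case using linear_compose[OF _ assms] by (simp add: comp_def)
qed

lemma continuous_on_funpow:
  fixes T :: "'a::topological_space \<Rightarrow> 'a"
  assumes "continuous_on UNIV T"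
  shows "continuous_on UNIV (T ^^ n)"
proof (induction n)
  case 0
  show ?case by (simp add: continuous_on_id funpow.simps(1))
next
  case (Suc n)
  then show ?case
    using continuous_on_compose[OF Suc continuous_on_subset[OF assms]] by (simp add: comp_def)
qed

lemma funpow_image_subset:
  fixes T :: "'a \<Rightarrow> 'a"
  assumes "T ` C \<subseteq> C"
  shows "(T ^^ n) ` C \<subseteq> C"
  using assms by (induction n) auto

lemma image_closure_orbit_subset:
  fixes T :: "'a::topological_space \<Rightarrow> 'a"
  assumes "continuous_on UNIV T"
  shows "T ` closure {(T ^^ n) x | n. True} \<subseteq> closure {(T ^^ n) x | n. True}"
proof -
  have "T ` {(T ^^ n) x | n. True} \<subseteq> {(T ^^ n) x | n. True}"
    by (auto intro: exI[of _ "Suc n" for n])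
  then have "T ` {(T ^^ n) x | n. True} \<subseteq> closure {(T ^^ n) x | n. True}"
    using closure_subset by blast
  then show ?thesis
    by (rule image_closure_subset[OF continuous_on_subset[OF assms subset_UNIV] closed_closure])
qed

lemma topologically_transitiveE:
  assumes "topologically_transitive T" "open U" "U \<noteq> {}" "open V" "V \<noteq> {}"
  obtains n x where "x \<in> U" "(T ^^ n) x \<in> V"
  using assms unfolding topologically_transitive_def N_T_def by blast

lemma topologically_transitive_invariant_closed_eq_UNIV:
  fixes T :: "'a::topological_space \<Rightarrow> 'a"
  assumes "topologically_transitive T" "closed C" "T ` C \<subseteq> C"
    and "open V" "V \<noteq> {}" "V \<subseteq> C"
  shows "C = UNIV"
proof (rule ccontr)
  assume "C \<noteq> UNIV"
  then obtain n y where "y \<in> V" "(T ^^ n) y \<in> - C"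
    using topologically_transitiveE[OF assms(1,4,5)] assms(2) by blast
  moreover from \<open>y \<in> V\<close> have "(T ^^ n) y \<in> C"
    using funpow_image_subset[OF assms(3), of n] assms(6) by blast
  ultimately show False by blast
qed

lemma linear_norm_le_of_ball_bound:
  fixes L :: "'a::real_normed_vector \<Rightarrow> 'b::real_normed_vector"
  assumes "linear L" "r > 0" "\<And>d. norm d < r \<Longrightarrow> norm (L d) \<le> \<delta>"
  shows "norm (L y) \<le> 2 * \<delta> / r * norm y"
proof (cases "y = 0")
  case True
  then show ?thesis using linear_0[OF assms(1)] by simp
next
  case False
  define s where "s = r / (2 * norm y)"
  have "s > 0" using False assms(2) by (simp add: s_def)
  have "norm (s *\<^sub>R y) < r" using False assms(2) by (simp add: s_def)
  then have "s * norm (L y) \<le> \<delta>"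
    using assms(3) linear_scale[OF assms(1)] \<open>s > 0\<close> by fastforce
  then show ?thesis using False assms(2) by (simp add: s_def field_simps)
qed

lemma N_T_uniformly_bounded_if_not_sensitive:
  fixes T :: "'a::real_normed_vector \<Rightarrow> 'a"
  assumes "linear T" "open W" "W \<noteq> {}" "\<delta> > 0"
    and "S_T T W \<delta> \<inter> N_T T U V = {}"
  obtains K where "K > 0" "\<And>n y. n \<in> N_T T U V \<Longrightarrow> norm ((T ^^ n) y) \<le> K * norm y"
proof -
  obtain w r where "r > 0" "ball w r \<subseteq> W"
    using assms(2,3) open_contains_ball by blast
  have "norm ((T ^^ n) d) \<le> \<delta>" if "n \<in> N_T T U V" "norm d < r" for n d
  proof -
    have "w + d \<in> W" "w \<in> W" using \<open>ball w r \<subseteq> W\<close> \<open>r > 0\<close> that(2) by (auto simp: dist_norm)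
    then have "norm ((T ^^ n) (w + d) - (T ^^ n) w) \<le> \<delta>"
      using that(1) assms(5) unfolding S_T_def by force
    then show ?thesis using linear_add[OF linear_funpow[OF assms(1)]] by simp
  qed
  then have "norm ((T ^^ n) y) \<le> 2 * \<delta> / r * norm y" if "n \<in> N_T T U V" for n y
    using linear_norm_le_of_ball_bound[OF linear_funpow[OF assms(1)] \<open>r > 0\<close>] that by blast
  moreover have "2 * \<delta> / r > 0" using \<open>r > 0\<close> assms(4) by simp
  ultimately show thesis using that by blast
qed

lemma orbit_closure_superset_if_N_T_uniformly_bounded:
  fixes T :: "'a::real_normed_vector \<Rightarrow> 'a"
  assumes "linear T" "topologically_transitive T" "open U" "open V"
    and "K > 0" "\<And>n y. n \<in> N_T T U V \<Longrightarrow> norm ((T ^^ n) y) \<le> K * norm y"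
    and "(T ^^ k) p \<in> U"
  shows "V \<subseteq> closure {(T ^^ n) p | n. True}"
proof
  fix c assume "c \<in> V"
  show "c \<in> closure {(T ^^ n) p | n. True}"
    unfolding closure_approachable
  proof (intro allI impI)
    fix e :: real assume "e > 0"
    define q where "q = (T ^^ k) p"
    have "q \<in> U \<inter> ball q (e / (2 * K))" "c \<in> V \<inter> ball c (e / 2)"
      using assms(5,7) \<open>c \<in> V\<close> \<open>e > 0\<close> by (simp_all add: q_def)
    then obtain n x where x: "x \<in> U \<inter> ball q (e / (2 * K))" "(T ^^ n) x \<in> V \<inter> ball c (e / 2)"
      using topologically_transitiveE[OF assms(2)] assms(3,4) by (metis empty_iff open_Int open_ball)
    then have "n \<in> N_T T U V" unfolding N_T_def by blast
    then have "norm ((T ^^ n) (q - x)) \<le> K * norm (q - x)" using assms(6) by blast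
    also have "\<dots> < e / 2"
      using x(1) assms(5) by (simp add: dist_norm field_simps)
    finally have "dist ((T ^^ n) q) ((T ^^ n) x) < e / 2"
      using linear_diff[OF linear_funpow[OF assms(1)]] by (simp add: dist_norm)
    moreover have "dist c ((T ^^ n) x) < e / 2" using x(2) by simp
    ultimately have "dist ((T ^^ n) q) c < e"
      using dist_triangle_less_add by fastforce
    moreover have "(T ^^ n) q = (T ^^ (n + k)) p" by (simp add: q_def funpow_add)
    ultimately show "\<exists>y\<in>{(T ^^ n) p | n. True}. dist y c < e" by blast
  qed
qed

lemma open_dense_Union_vimage_funpow:
  fixes T :: "'a::topological_space \<Rightarrow> 'a"
  assumes "topologically_transitive T" "continuous_on UNIV T" "open U" "U \<noteq> {}"
  shows "open (\<Union>n. (T ^^ n) -` U)" "closure (\<Union>n. (T ^^ n) -` U) = UNIV"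
proof -
  let ?S = "\<Union>n. (T ^^ n) -` U"
  show "open ?S"
    using continuous_on_funpow[OF assms(2)] assms(3) open_vimage by blast
  show "closure ?S = UNIV"
  proof (rule ccontr)
    assume "closure ?S \<noteq> UNIV"
    then obtain n x where "x \<notin> closure ?S" "(T ^^ n) x \<in> U"
      using topologically_transitiveE[OF assms(1) open_Compl[OF closed_closure] _ assms(3,4)]
      by blast
    then show False using closure_subset[of ?S] by blast
  qed
qed

theorem proposition7p4:
  fixes T :: "'a::banach \<Rightarrow> 'a"
  assumes "separable_space (euclidean :: 'a topology)"
    and "\<not> (\<exists>B. finite B \<and> span B = (UNIV :: 'a set))"
    and "bounded_linear T"
    and "topologically_transitive T"
    and "\<not> transitively_sensitive T"
  shows "\<exists>U0. open U0 \<and> closure U0 = UNIV \<and>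
           (\<forall>x\<in>U0. closure {(T ^^ n) x | n. True} = UNIV)"
proof -
  have lin: "linear T" and cont: "continuous_on UNIV T"
    using assms(3) bounded_linear.linear linear_continuous_on by auto
  obtain U V W where UVW: "open U" "U \<noteq> {}" "open V" "V \<noteq> {}" "open W" "W \<noteq> {}"
    and "S_T T W 1 \<inter> N_T T U V = {}"
    using assms(5) unfolding transitively_sensitive_def by (metis zero_less_one)
  then obtain K where K: "K > 0" "\<And>n y. n \<in> N_T T U V \<Longrightarrow> norm ((T ^^ n) y) \<le> K * norm y"
    using N_T_uniformly_bounded_if_not_sensitive[OF lin] by (metis zero_less_one)
  have "closure {(T ^^ n) x | n. True} = UNIV" if "(T ^^ k) x \<in> U" for x k
    by (rule topologically_transitive_invariant_closed_eq_UNIV[OF assms(4) closed_closure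
        image_closure_orbit_subset[OF cont] UVW(3,4)
        orbit_closure_superset_if_N_T_uniformly_bounded[OF lin assms(4) UVW(1,3) K that]])
  then show ?thesis
    using open_dense_Union_vimage_funpow[OF assms(4) cont UVW(1,2)] by blast
qed

end
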